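(* Let $\nu$ be a modulus of variation, $1\le p<\infty$, and $\varepsilon_p(k)=(\nu(k)^p-\nu(k-1)^p)^{1/p}$ for $k\ge1$. Then: (i) $\{\nu(k)/k^{1/p}\}$ is nonincreasing if and only if $\{\nu(k)^p\}$ is quasiconcave, if and only if $\varepsilon_p(k)\le\nu(k)/k^{1/p}$ for all $k$; (ii) $\{\varepsilon_p(k)\}$ is nonincreasing if and only if $\{\nu(k)^p\}$ is concave; in this case, if $\nu(k)/k^{1/p}\to0$ then $\{\nu(k)/k^{1/p}\}$ is strictly decreasing from some index on; (iii) there is a constant $C$ such that $\nu(k)-\nu(k-1)\le C\,\varepsilon_p(k)\,k^{1/p-1}$ for all $k\ge1$.
   Context: A modulus of variation is a nondecreasing concave sequence of positive numbers $\nu(1),\nu(2),\dots$ (concave meaning $a_{k+1}+a_{k-1}\le2a_k$ for all $k$), with the convention $\nu(0)=0$. A sequence $\{a_k\}$ of positive numbers is quasiconcave if $\{a_k\}$ is nondecreasing and $\{a_k/k\}$ is nonincreasing. *)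

theory Defs
  imports Complex_Main
begin

text \<open>Sequences are functions nat => real; index 0 carries the convention value
  (nu 0 = 0), the "genuine" sequence starts at index 1.\<close>

definition concave_seq :: "(nat \<Rightarrow> real) \<Rightarrow> bool" where
  "concave_seq a \<longleftrightarrow> (\<forall>k\<ge>1. a (Suc k) + a (k - 1) \<le> 2 * a k)"

definition modulus_of_variation :: "(nat \<Rightarrow> real) \<Rightarrow> bool" where
  "modulus_of_variation \<nu> \<longleftrightarrow>
     \<nu> 0 = 0 \<and> (\<forall>k\<ge>1. \<nu> k > 0) \<and> (\<forall>k\<ge>1. \<nu> k \<le> \<nu> (Suc k)) \<and> concave_seq \<nu>"

definition quasiconcave :: "(nat \<Rightarrow> real) \<Rightarrow> bool" where
  "quasiconcave a \<longleftrightarrow> (\<forall>k\<ge>1. a k > 0) \<and> (\<forall>k\<ge>1. a k \<le> a (Suc k))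
     \<and> (\<forall>k\<ge>1. a (Suc k) / real (Suc k) \<le> a k / real k)"

definition eps_p :: "(nat \<Rightarrow> real) \<Rightarrow> real \<Rightarrow> nat \<Rightarrow> real" where
  "eps_p \<nu> p k = (\<nu> k powr p - \<nu> (k - 1) powr p) powr (1 / p)"

definition nonincr_seq :: "(nat \<Rightarrow> real) \<Rightarrow> bool" where
  "nonincr_seq a \<longleftrightarrow> (\<forall>k\<ge>1. a (Suc k) \<le> a k)"

end

theory Submission
  imports Defs
begin

text \<open>Put a(k) = nu(k)^p. Then nu(k)/k^(1/p) and eps_p(k) are the p-th roots of a(k)/k and of
  a(k) - a(k-1), so (i) and the first half of (ii) are statements about a alone: the ratios
  a(k)/k decrease iff every increment a(k) - a(k-1) is at most a(k)/k, and the increments decrease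
  iff a is concave. If a is concave and a(k)/k fails to decrease at some step k, then it has been
  nondecreasing all the way from k = 1, so a(k+1)/(k+1) >= a(1) > 0; when a(k)/k tends to 0 this
  can happen only finitely often. For (iii), concavity of nu gives k (nu(k) - nu(k-1)) <= nu(k),
  and y^p - x^p >= y^(p-1) (y - x) for 0 <= x <= y then yields the bound with C = 1.\<close>

lemma powr_le_powr_iff:
  fixes x y a :: real
  assumes "0 \<le> x" "0 \<le> y" "0 < a"
  shows "x powr a \<le> y powr a \<longleftrightarrow> x \<le> y"
  using assms by (meson less_imp_le not_le powr_less_mono2 powr_mono2)

lemma powr_less_powr_iff:
  fixes x y a :: real
  assumes "0 \<le> x" "0 \<le> y" "0 < a"
  shows "x powr a < y powr a \<longleftrightarrow> x < y"
  using powr_le_powr_iff[OF assms(2,1,3)] by (simp add: not_le[symmetric])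

lemma divide_powr_eq_powr_divide:
  fixes x t p :: real
  assumes "0 \<le> x" "p \<noteq> 0"
  shows "x / t powr (1 / p) = (x powr p / t) powr (1 / p)"
  using assms by (simp add: powr_divide powr_powr)

lemma nonincr_seq_powr_iff:
  assumes "\<And>k. 0 \<le> g k" "0 < r"
  shows "nonincr_seq (\<lambda>k. g k powr r) \<longleftrightarrow> nonincr_seq g"
  using assms by (simp add: nonincr_seq_def powr_le_powr_iff)

lemma quasiconcave_iff_nonincr_ratio:
  assumes "\<forall>k\<ge>1. 0 < a k" "mono a"
  shows "quasiconcave a \<longleftrightarrow> nonincr_seq (\<lambda>k. a k / real k)"
  using assms by (simp add: quasiconcave_def nonincr_seq_def monoD)

lemma concave_seq_iff_nonincr_increments:
  "concave_seq a \<longleftrightarrow> nonincr_seq (\<lambda>k. a k - a (k - 1))"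
  unfolding concave_seq_def nonincr_seq_def by (intro all_cong) auto

lemma increment_le_ratio_iff_ratio_le:
  fixes a :: "nat \<Rightarrow> real"
  assumes "1 \<le> k"
  shows "a (Suc k) - a k \<le> a (Suc k) / real (Suc k) \<longleftrightarrow> a (Suc k) / real (Suc k) \<le> a k / real k"
  using assms by (simp add: field_simps)

lemma nonincr_ratio_iff_increments_le_ratio:
  fixes a :: "nat \<Rightarrow> real"
  assumes "a 0 = 0"
  shows "nonincr_seq (\<lambda>k. a k / real k) \<longleftrightarrow> (\<forall>k\<ge>1. a k - a (k - 1) \<le> a k / real k)"
proof -
  have "(\<forall>k\<ge>1. a k - a (k - 1) \<le> a k / real k) \<longleftrightarrow>
        (\<forall>k\<ge>1. a (Suc k) - a k \<le> a (Suc k) / real (Suc k))"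
  proof (intro iffI allI impI)
    fix k :: nat
    assume "\<forall>k\<ge>1. a k - a (k - 1) \<le> a k / real k" "1 \<le> k"
    then show "a (Suc k) - a k \<le> a (Suc k) / real (Suc k)" by fastforce
  next
    fix k :: nat
    assume shifted: "\<forall>k\<ge>1. a (Suc k) - a k \<le> a (Suc k) / real (Suc k)" and "1 \<le> k"
    show "a k - a (k - 1) \<le> a k / real k"
    proof (cases k)
      case (Suc j)
      with shifted assms show ?thesis by (cases "j = 0") auto
    qed (use \<open>1 \<le> k\<close> in simp)
  qed
  then show ?thesis
    unfolding nonincr_seq_def by (simp add: increment_le_ratio_iff_ratio_le del: of_nat_Suc)
qed

lemma concave_seqD:
  "concave_seq a \<Longrightarrow> 1 \<le> k \<Longrightarrow> a (Suc k) + a (k - 1) \<le> 2 * a k"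
  by (simp add: concave_seq_def)

lemma concave_seq_ratio_increase_step_down:
  fixes a :: "nat \<Rightarrow> real"
  assumes "concave_seq a" "2 \<le> k" "a k / real k \<le> a (Suc k) / real (Suc k)"
  shows "a (k - 1) / real (k - 1) \<le> a k / real k"
proof -
  have "real (Suc k) * a k \<le> real k * a (Suc k)"
    using assms(2,3) by (simp add: field_simps)
  also have "\<dots> \<le> real k * (2 * a k - a (k - 1))"
    using concave_seqD[OF assms(1), of k] assms(2) by (intro mult_left_mono) auto
  finally have "real k * a (k - 1) \<le> real (k - 1) * a k"
    using assms(2) by (simp add: algebra_simps)
  with assms(2) show ?thesis by (simp add: field_simps)
qed

lemma concave_seq_ratio_increase_ge_first:
  fixes a :: "nat \<Rightarrow> real"
  assumes "concave_seq a" "1 \<le> k" "a k / real k \<le> a (Suc k) / real (Suc k)"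
  shows "a 1 \<le> a (Suc k) / real (Suc k)"
  using assms(2,3)
proof (induction k rule: dec_induct)
  case base
  then show ?case by simp
next
  case (step k)
  then have "a k / real k \<le> a (Suc k) / real (Suc k)"
    using concave_seq_ratio_increase_step_down[OF assms(1), of "Suc k"] by simp
  with step show ?case by linarith
qed

lemma concave_seq_ratio_eventually_decreasing:
  fixes a :: "nat \<Rightarrow> real"
  assumes "concave_seq a" "0 < a 1" "(\<lambda>k. a k / real k) \<longlonglongrightarrow> 0"
  shows "\<exists>N\<ge>1. \<forall>k\<ge>N. a (Suc k) / real (Suc k) < a k / real k"
proof -
  obtain M where M: "\<And>k. M \<le> k \<Longrightarrow> a k / real k < a 1"
    using order_tendstoD(2)[OF assms(3,2)] by (auto simp: eventually_sequentially)
  have "a (Suc k) / real (Suc k) < a k / real k" if "max M 1 \<le> k" for k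
  proof (rule ccontr)
    assume "\<not> ?thesis"
    then have "a 1 \<le> a (Suc k) / real (Suc k)"
      using concave_seq_ratio_increase_ge_first[OF assms(1)] that by simp
    with M[of "Suc k"] that show False by simp
  qed
  then show ?thesis by (intro exI[of _ "max M 1"]) auto
qed

lemma concave_seq_increment_le_ratio:
  fixes a :: "nat \<Rightarrow> real"
  assumes "concave_seq a" "0 \<le> a 0" "1 \<le> k"
  shows "real k * (a k - a (k - 1)) \<le> a k"
  using assms(3)
proof (induction k rule: dec_induct)
  case base
  with assms(2) show ?case by simp
next
  case (step k)
  have "real k * (a (Suc k) - a k) \<le> real k * (a k - a (k - 1))"
    using concave_seqD[OF assms(1) step(1)] by (intro mult_left_mono) auto
  with step(3) show ?case by (simp add: algebra_simps)
qed

lemma powr_diff_ge: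
  fixes x y p :: real
  assumes "0 \<le> x" "x \<le> y" "1 \<le> p"
  shows "y powr (p - 1) * (y - x) \<le> y powr p - x powr p"
proof -
  have "x powr p \<le> y powr (p - 1) * x"
  proof (cases "x = 0")
    case False
    then have "x powr p = x powr (p - 1) * x"
      using assms(1) powr_add[of x "p - 1" 1] by simp
    also have "\<dots> \<le> y powr (p - 1) * x"
      using assms by (intro mult_right_mono powr_mono2) auto
    finally show ?thesis .
  qed simp
  moreover have "y powr p = y powr (p - 1) * y"
    using assms powr_add[of y "p - 1" 1] by simp
  ultimately show ?thesis by (simp add: algebra_simps)
qed

lemma modulus_of_variation_pos:
  "modulus_of_variation \<nu> \<Longrightarrow> 1 \<le> k \<Longrightarrow> 0 < \<nu> k"
  by (simp add: modulus_of_variation_def)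

lemma modulus_of_variation_nonneg:
  assumes "modulus_of_variation \<nu>"
  shows "0 \<le> \<nu> k"
proof (cases "k = 0")
  case False
  then show ?thesis using modulus_of_variation_pos[OF assms, of k] by simp
qed (use assms in \<open>simp add: modulus_of_variation_def\<close>)

lemma modulus_of_variation_mono:
  assumes "modulus_of_variation \<nu>"
  shows "mono \<nu>"
  unfolding mono_iff_le_Suc
proof
  fix k
  show "\<nu> k \<le> \<nu> (Suc k)"
    using assms modulus_of_variation_nonneg[OF assms, of 1]
    by (cases "k = 0") (auto simp: modulus_of_variation_def)
qed

lemma modulus_of_variation_powr_mono:
  assumes "modulus_of_variation \<nu>" "0 \<le> p"
  shows "mono (\<lambda>k. \<nu> k powr p)"
  using modulus_of_variation_mono[OF assms(1)] modulus_of_variation_nonneg[OF assms(1)] assms(2)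
  by (auto simp: mono_def intro: powr_mono2)

lemma modulus_of_variation_quasiconcave_powr_iff:
  assumes "modulus_of_variation \<nu>" "0 < p"
  shows "quasiconcave (\<lambda>k. \<nu> k powr p) \<longleftrightarrow> nonincr_seq (\<lambda>k. \<nu> k powr p / real k)"
  using assms modulus_of_variation_powr_mono[of \<nu> p]
  by (intro quasiconcave_iff_nonincr_ratio) (auto simp: modulus_of_variation_def)

lemma modulus_of_variation_ratio_nonincr_iff:
  assumes "modulus_of_variation \<nu>" "0 < p"
  shows "nonincr_seq (\<lambda>k. \<nu> k / real k powr (1 / p)) \<longleftrightarrow> quasiconcave (\<lambda>k. \<nu> k powr p)"
  using nonincr_seq_powr_iff[of "\<lambda>k. \<nu> k powr p / real k" "1 / p"] assms
  by (simp add: divide_powr_eq_powr_divide modulus_of_variation_nonneg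
      modulus_of_variation_quasiconcave_powr_iff)

lemma modulus_of_variation_quasiconcave_iff_eps_p_le_ratio:
  assumes "modulus_of_variation \<nu>" "0 < p"
  shows "quasiconcave (\<lambda>k. \<nu> k powr p) \<longleftrightarrow>
    (\<forall>k\<ge>1. eps_p \<nu> p k \<le> \<nu> k / real k powr (1 / p))"
proof -
  have "0 \<le> \<nu> k powr p - \<nu> (k - 1) powr p" for k
    using monoD[OF modulus_of_variation_powr_mono, of \<nu> p "k - 1" k] assms by simp
  then have "(\<forall>k\<ge>1. eps_p \<nu> p k \<le> \<nu> k / real k powr (1 / p)) \<longleftrightarrow>
      (\<forall>k\<ge>1. \<nu> k powr p - \<nu> (k - 1) powr p \<le> \<nu> k powr p / real k)"
    using assms
    by (simp add: eps_p_def divide_powr_eq_powr_divide modulus_of_variation_nonneg powr_le_powr_iff)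
  also have "\<dots> \<longleftrightarrow> nonincr_seq (\<lambda>k. \<nu> k powr p / real k)"
    using assms(1)
    by (intro nonincr_ratio_iff_increments_le_ratio[symmetric]) (simp add: modulus_of_variation_def)
  finally show ?thesis
    using modulus_of_variation_quasiconcave_powr_iff[OF assms] by simp
qed

lemma modulus_of_variation_eps_p_nonincr_iff:
  assumes "modulus_of_variation \<nu>" "0 < p"
  shows "nonincr_seq (eps_p \<nu> p) \<longleftrightarrow> concave_seq (\<lambda>k. \<nu> k powr p)"
proof -
  have "0 \<le> \<nu> k powr p - \<nu> (k - 1) powr p" for k
    using monoD[OF modulus_of_variation_powr_mono, of \<nu> p "k - 1" k] assms by simp
  with assms show ?thesis
    using nonincr_seq_powr_iff[of "\<lambda>k. \<nu> k powr p - \<nu> (k - 1) powr p" "1 / p"]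
    by (simp add: eps_p_def[abs_def] concave_seq_iff_nonincr_increments)
qed

lemma modulus_of_variation_ratio_eventually_decreasing:
  assumes "modulus_of_variation \<nu>" "0 < p" "concave_seq (\<lambda>k. \<nu> k powr p)"
    and lim: "(\<lambda>k. \<nu> k / real k powr (1 / p)) \<longlonglongrightarrow> 0"
  shows "\<exists>N\<ge>1. \<forall>k\<ge>N. \<nu> (Suc k) / real (Suc k) powr (1 / p) < \<nu> k / real k powr (1 / p)"
proof -
  have root: "\<nu> k / real k powr (1 / p) = (\<nu> k powr p / real k) powr (1 / p)" for k
    using assms(1,2) by (simp add: divide_powr_eq_powr_divide modulus_of_variation_nonneg)
  have "(\<lambda>k. (\<nu> k / real k powr (1 / p)) powr p) \<longlonglongrightarrow> 0"
    using tendsto_zero_powrI[OF lim tendsto_const _ assms(2)] assms(1)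
    by (simp add: modulus_of_variation_nonneg)
  then have "(\<lambda>k. \<nu> k powr p / real k) \<longlonglongrightarrow> 0"
    using assms(2) by (simp add: root powr_powr)
  moreover have "0 < \<nu> 1 powr p"
    using modulus_of_variation_pos[OF assms(1), of 1] by simp
  ultimately obtain N where "N \<ge> 1"
    "\<forall>k\<ge>N. \<nu> (Suc k) powr p / real (Suc k) < \<nu> k powr p / real k"
    using concave_seq_ratio_eventually_decreasing[OF assms(3)] by blast
  then show ?thesis
    unfolding root using assms(2) by (auto simp: powr_less_powr_iff)
qed

lemma modulus_of_variation_increment_le_eps_p:
  assumes "modulus_of_variation \<nu>" "1 \<le> p" "1 \<le> k"
  shows "\<nu> k - \<nu> (k - 1) \<le> eps_p \<nu> p k * real k powr (1 / p - 1)"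
proof -
  define x y where "x = \<nu> (k - 1)" and "y = \<nu> k"
  have "0 \<le> x" "x \<le> y"
    using assms(1) modulus_of_variation_nonneg modulus_of_variation_mono
    by (auto simp: x_def y_def monoD)
  have ky: "real k * (y - x) \<le> y"
    using assms(1,3) concave_seq_increment_le_ratio[of \<nu> k]
    by (simp add: modulus_of_variation_def x_def y_def)
  show ?thesis
  proof (cases "x = y")
    case True
    then show ?thesis by (simp add: x_def y_def eps_p_def)
  next
    case False
    with \<open>x \<le> y\<close> have d: "0 < y - x" by simp
    have "real k powr (p - 1) * (y - x) powr p = (real k * (y - x)) powr (p - 1) * (y - x)"
      using d powr_add[of "y - x" "p - 1" 1] by (simp add: powr_mult)
    also have "\<dots> \<le> y powr (p - 1) * (y - x)"
      using ky d assms(2,3) by (intro mult_right_mono powr_mono2) auto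
    also have "\<dots> \<le> y powr p - x powr p"
      using \<open>0 \<le> x\<close> \<open>x \<le> y\<close> assms(2) by (rule powr_diff_ge)
    finally have "(real k powr (p - 1) * (y - x) powr p) powr (1 / p) \<le> eps_p \<nu> p k"
      using assms(2) by (simp add: eps_p_def x_def y_def powr_mono2)
    then have "real k powr (1 - 1 / p) * (y - x) \<le> eps_p \<nu> p k"
      using d assms(2) by (simp add: powr_mult powr_powr diff_divide_distrib)
    then have "real k powr (1 - 1 / p) * (y - x) * real k powr (1 / p - 1)
        \<le> eps_p \<nu> p k * real k powr (1 / p - 1)"
      by (rule mult_right_mono) simp
    moreover have "real k powr (1 - 1 / p) * real k powr (1 / p - 1) = 1"
      using assms(3) by (simp flip: powr_add)
    ultimately show ?thesis by (simp add: x_def y_def algebra_simps)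
  qed
qed

theorem lemma2p1:
  fixes \<nu> :: "nat \<Rightarrow> real" and p :: real
  assumes "modulus_of_variation \<nu>" and "1 \<le> p"
  shows "(nonincr_seq (\<lambda>k. \<nu> k / real k powr (1 / p))
            \<longleftrightarrow> quasiconcave (\<lambda>k. \<nu> k powr p))
       \<and> (quasiconcave (\<lambda>k. \<nu> k powr p)
            \<longleftrightarrow> (\<forall>k\<ge>1. eps_p \<nu> p k \<le> \<nu> k / real k powr (1 / p)))
       \<and> (nonincr_seq (eps_p \<nu> p) \<longleftrightarrow> concave_seq (\<lambda>k. \<nu> k powr p))
       \<and> (nonincr_seq (eps_p \<nu> p) \<longrightarrow>
            (\<lambda>k. \<nu> k / real k powr (1 / p)) \<longlonglongrightarrow> 0 \<longrightarrow>
            (\<exists>N\<ge>1. \<forall>k\<ge>N. \<nu> (Suc k) / real (Suc k) powr (1 / p) < \<nu> k / real k powr (1 / p)))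
       \<and> (\<exists>C. \<forall>k\<ge>1. \<nu> k - \<nu> (k - 1) \<le> C * eps_p \<nu> p k * real k powr (1 / p - 1))"
proof -
  have p: "0 < p"
    using assms(2) by simp
  have increment_bound:
    "\<exists>C. \<forall>k\<ge>1. \<nu> k - \<nu> (k - 1) \<le> C * eps_p \<nu> p k * real k powr (1 / p - 1)"
    using modulus_of_variation_increment_le_eps_p[OF assms] by (intro exI[of _ 1]) simp
  show ?thesis
    using modulus_of_variation_ratio_nonincr_iff[OF assms(1) p]
      modulus_of_variation_quasiconcave_iff_eps_p_le_ratio[OF assms(1) p]
      modulus_of_variation_eps_p_nonincr_iff[OF assms(1) p]
      modulus_of_variation_ratio_eventually_decreasing[OF assms(1) p]
      increment_bound
    by blast
qed

end
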